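(* Let $d>0$, $a\geq 7$ be integers with $\gcd(a,d)=1$, write $a=6m+q$ with $0\leq q\leq 5$, and let $\mathfrak{p}_4\subset A=k[x_1,x_2,x_3,x_4]$ be the kernel of the $k$-algebra map $A\to k[t]$, $x_1\mapsto t^{a}$, $x_2\mapsto t^{2a+d}$, $x_3\mapsto t^{3a+3d}$, $x_4\mapsto t^{4a+6d}$ ($k$ a field). Then $\mathfrak{p}_4$ is minimally generated by the set $H_q$, where: $H_0=\{x_3^2-x_1^2x_4,\ x_2^3-x_1^3x_3,\ x_1^{4m+d}-x_4^{m}\}$; $H_1=\{x_3^2-x_1^2x_4,\ x_2^3-x_1^3x_3,\ x_1^{7}-x_2x_4,\ x_1^{4}x_2^{2}-x_3x_4,\ x_1^{2}x_2^{2}x_3-x_4^{2}\}$ if $m=d=1$, and otherwise $H_1=\{x_3^2-x_1^2x_4,\ x_2^3-x_1^3x_3,\ x_1^{4m+d-6}x_2^{5}-x_4^{m+1},\ x_1^{4m+d-1}x_2^{2}-x_3x_4^{m},\ x_1^{4m+d+2}-x_2x_4^{m}\}$; $H_2=\{x_3^2-x_1^2x_4,\ x_2^3-x_1^3x_3,\ x_1^{4m+d-4}x_2^{4}-x_4^{m+1},\ x_1^{4m+d+1}x_2-x_3x_4^{m},\ x_1^{4m+d+4}-x_2^{2}x_4^{m}\}$; $H_3=\{x_3^2-x_1^2x_4,\ x_2^3-x_1^3x_3,\ x_1^{4m+d-2}x_2^{3}-x_4^{m+1},\ x_1^{4m+d+3}-x_3x_4^{m}\}$; $H_4=\{x_3^2-x_1^2x_4,\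 x_2^3-x_1^3x_3,\ x_1^{4m+d}x_2^{2}-x_4^{m+1},\ x_1^{4m+d+5}-x_2x_3x_4^{m}\}$; $H_5=\{x_3^2-x_1^2x_4,\ x_2^3-x_1^3x_3,\ x_1^{4m+d+2}x_2-x_4^{m+1},\ x_1^{4m+d+7}-x_2^{2}x_3x_4^{m}\}$. *)

theory Defs
  imports "HOL-Library.Poly_Mapping" "HOL-Computational_Algebra.Polynomial"
begin

datatype var4 = V1 | V2 | V3 | V4

type_synonym 'k mpoly4 = "(var4 \<Rightarrow>\<^sub>0 nat) \<Rightarrow>\<^sub>0 'k"

definition xv :: "var4 \<Rightarrow> 'k::field mpoly4" where
  "xv v = Poly_Mapping.single (Poly_Mapping.single v 1) 1"

abbreviation "x1 \<equiv> xv V1"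
abbreviation "x2 \<equiv> xv V2"
abbreviation "x3 \<equiv> xv V3"
abbreviation "x4 \<equiv> xv V4"

fun wt :: "nat \<Rightarrow> nat \<Rightarrow> var4 \<Rightarrow> nat" where
  "wt a d V1 = a"
| "wt a d V2 = 2*a + d"
| "wt a d V3 = 3*a + 3*d"
| "wt a d V4 = 4*a + 6*d"

definition phi :: "nat \<Rightarrow> nat \<Rightarrow> 'k::field mpoly4 \<Rightarrow> 'k poly" where
  "phi a d p = (\<Sum>\<alpha>\<in>Poly_Mapping.keys p.
      Polynomial.monom (Poly_Mapping.lookup p \<alpha>)
        (\<Sum>v\<in>Poly_Mapping.keys \<alpha>. Poly_Mapping.lookup \<alpha> v * wt a d v))"

definition kernel_p4 :: "nat \<Rightarrow> nat \<Rightarrow> 'k::field mpoly4 set" where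
  "kernel_p4 a d = {p. phi a d p = 0}"

definition ideal_gen :: "'k::field mpoly4 set \<Rightarrow> 'k mpoly4 set" where
  "ideal_gen S = {p. \<exists>F c. finite F \<and> F \<subseteq> S \<and> p = (\<Sum>h\<in>F. c h * h)}"

definition minimally_generates :: "'k::field mpoly4 set \<Rightarrow> 'k mpoly4 set \<Rightarrow> bool" where
  "minimally_generates S I \<longleftrightarrow> ideal_gen S = I \<and> (\<forall>T. T \<subset> S \<longrightarrow> ideal_gen T \<noteq> I)"

definition Hset :: "nat \<Rightarrow> nat \<Rightarrow> 'k::field mpoly4 set" where
  "Hset a d = (let m = a div 6; q = a mod 6 in
    if q = 0 then
      {x3^2 - x1^2*x4, x2^3 - x1^3*x3, x1^(4*m+d) - x4^m}
    else if q = 1 then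
      (if m = 1 \<and> d = 1 then
        {x3^2 - x1^2*x4, x2^3 - x1^3*x3, x1^7 - x2*x4, x1^4*x2^2 - x3*x4,
         x1^2*x2^2*x3 - x4^2}
       else
        {x3^2 - x1^2*x4, x2^3 - x1^3*x3, x1^(4*m+d-6)*x2^5 - x4^(m+1),
         x1^(4*m+d-1)*x2^2 - x3*x4^m, x1^(4*m+d+2) - x2*x4^m})
    else if q = 2 then
      {x3^2 - x1^2*x4, x2^3 - x1^3*x3, x1^(4*m+d-4)*x2^4 - x4^(m+1),
       x1^(4*m+d+1)*x2 - x3*x4^m, x1^(4*m+d+4) - x2^2*x4^m}
    else if q = 3 then
      {x3^2 - x1^2*x4, x2^3 - x1^3*x3, x1^(4*m+d-2)*x2^3 - x4^(m+1),
       x1^(4*m+d+3) - x3*x4^m}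
    else if q = 4 then
      {x3^2 - x1^2*x4, x2^3 - x1^3*x3, x1^(4*m+d)*x2^2 - x4^(m+1),
       x1^(4*m+d+5) - x2*x3*x4^m}
    else
      {x3^2 - x1^2*x4, x2^3 - x1^3*x3, x1^(4*m+d+2)*x2 - x4^(m+1),
       x1^(4*m+d+7) - x2^2*x3*x4^m})"

end

theory Submission
  imports Defs
begin

text \<open>
  The kernel of \<open>phi\<close> is spanned by the binomials \<open>x\<^sup>\<alpha> - x\<^sup>\<beta>\<close> whose monomials have the same
  weight, so a set of binomials generates it as soon as any two monomials of equal weight are
  connected by moves along the set. The weight of \<open>x\<^sup>\<alpha>\<close> is \<open>a A + d D\<close> with
  \<open>A = \<alpha>\<^sub>1 + 2\<alpha>\<^sub>2 + 3\<alpha>\<^sub>3 + 4\<alpha>\<^sub>4\<close> and \<open>D = \<alpha>\<^sub>2 + 3\<alpha>\<^sub>3 + 6\<alpha>\<^sub>4\<close>. The quadrics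
  \<open>x\<^sub>3\<^sup>2 - x\<^sub>1\<^sup>2x\<^sub>4\<close> and \<open>x\<^sub>2\<^sup>3 - x\<^sub>1\<^sup>3x\<^sub>3\<close> move every monomial, without changing \<open>D\<close>, to one with
  \<open>\<alpha>\<^sub>2 \<le> 2\<close> and \<open>\<alpha>\<^sub>3 \<le> 1\<close>; the remaining generators of \<open>H\<^sub>q\<close> lower \<open>D\<close> as long as \<open>D \<ge> a\<close>.
  For the resulting normal forms the weight determines \<open>D\<close> modulo \<open>a\<close>, because
  \<open>gcd(a, d) = 1\<close>, hence outright as \<open>D < a\<close>, and with it the whole exponent vector.
  Minimality holds because each generator has a monomial that no monomial of another
  generator divides.
\<close>

lemma UNIV_var4: "(UNIV :: var4 set) = {V1, V2, V3, V4}"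
  using var4.exhaust by auto

lemma finite_var4 [simp]: "finite (UNIV :: var4 set)"
  by (simp add: UNIV_var4)

lemma poly_mapping_var4_eqI:
  assumes "Poly_Mapping.lookup \<alpha> V1 = Poly_Mapping.lookup \<beta> V1"
    "Poly_Mapping.lookup \<alpha> V2 = Poly_Mapping.lookup \<beta> V2"
    "Poly_Mapping.lookup \<alpha> V3 = Poly_Mapping.lookup \<beta> V3"
    "Poly_Mapping.lookup \<alpha> V4 = Poly_Mapping.lookup \<beta> V4"
  shows "\<alpha> = \<beta>"
proof (rule poly_mapping_eqI)
  show "Poly_Mapping.lookup \<alpha> v = Poly_Mapping.lookup \<beta> v" for v
    using assms by (cases v) simp_all
qed

section \<open>Weights of monomials and the map \<open>phi\<close>\<close>

definition mon_weight :: "nat \<Rightarrow> nat \<Rightarrow> (var4 \<Rightarrow>\<^sub>0 nat) \<Rightarrow> nat" where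
  "mon_weight a d \<alpha> = (\<Sum>v\<in>Poly_Mapping.keys \<alpha>. Poly_Mapping.lookup \<alpha> v * wt a d v)"

definition a_degree :: "(var4 \<Rightarrow>\<^sub>0 nat) \<Rightarrow> nat" where
  "a_degree \<alpha> = Poly_Mapping.lookup \<alpha> V1 + 2 * Poly_Mapping.lookup \<alpha> V2
     + 3 * Poly_Mapping.lookup \<alpha> V3 + 4 * Poly_Mapping.lookup \<alpha> V4"

definition d_degree :: "(var4 \<Rightarrow>\<^sub>0 nat) \<Rightarrow> nat" where
  "d_degree \<alpha> = Poly_Mapping.lookup \<alpha> V2 + 3 * Poly_Mapping.lookup \<alpha> V3 + 6 * Poly_Mapping.lookup \<alpha> V4"

lemma mon_weight_eq: "mon_weight a d \<alpha> = a * a_degree \<alpha> + d * d_degree \<alpha>"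
proof -
  have "mon_weight a d \<alpha> = (\<Sum>v\<in>UNIV. Poly_Mapping.lookup \<alpha> v * wt a d v)"
    unfolding mon_weight_def by (rule sum.mono_neutral_left) (auto simp: in_keys_iff)
  then show ?thesis
    by (simp add: UNIV_var4 a_degree_def d_degree_def algebra_simps)
qed

lemma a_degree_add [simp]: "a_degree (\<alpha> + \<beta>) = a_degree \<alpha> + a_degree \<beta>"
  by (simp add: a_degree_def lookup_add)

lemma d_degree_add [simp]: "d_degree (\<alpha> + \<beta>) = d_degree \<alpha> + d_degree \<beta>"
  by (simp add: d_degree_def lookup_add)

lemma mon_weight_add: "mon_weight a d (\<alpha> + \<beta>) = mon_weight a d \<alpha> + mon_weight a d \<beta>"
  by (simp add: mon_weight_eq algebra_simps)

lemma phi_eq: "phi a d p = (\<Sum>\<alpha>\<in>Poly_Mapping.keys p. monom (Poly_Mapping.lookup p \<alpha>) (mon_weight a d \<alpha>))"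
  unfolding phi_def mon_weight_def ..

lemma phi_zero [simp]: "phi a d 0 = 0"
  by (simp add: phi_eq)

lemma phi_single: "phi a d (Poly_Mapping.single \<alpha> c) = monom c (mon_weight a d \<alpha>)"
  by (simp add: phi_eq)

lemma phi_add: "phi a d (p + q) = phi a d p + phi a d q"
  unfolding phi_eq by (rule setsum_keys_plus_distrib) (simp_all add: add_monom)

lemma phi_uminus: "phi a d (- p) = - phi a d p"
  by (simp add: phi_eq sum_negf[symmetric] minus_monom)

lemma phi_diff: "phi a d (p - q) = phi a d p - phi a d q"
  using phi_add[of a d p "- q"] by (simp add: phi_uminus)

lemma phi_sum: "phi a d (\<Sum>i\<in>A. f i) = (\<Sum>i\<in>A. phi a d (f i))"
  by (induction A rule: infinite_finite_induct) (auto simp: phi_add)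

lemma sum_single_lookup:
  "(\<Sum>\<alpha>\<in>Poly_Mapping.keys p. Poly_Mapping.single \<alpha> (Poly_Mapping.lookup p \<alpha>)) = p"
  by (rule poly_mapping_eqI) (auto simp: lookup_sum lookup_single when_def in_keys_iff
      intro!: sum.neutral elim!: sum.mono_neutral_left)

lemma phi_mult: "phi a d (p * q) = phi a d p * phi a d q"
proof -
  have "p * q = (\<Sum>\<alpha>\<in>Poly_Mapping.keys p. \<Sum>\<beta>\<in>Poly_Mapping.keys q.
      Poly_Mapping.single (\<alpha> + \<beta>) (Poly_Mapping.lookup p \<alpha> * Poly_Mapping.lookup q \<beta>))"
    by (subst (1 2) sum_single_lookup[symmetric]) (simp add: sum_product mult_single)
  then have "phi a d (p * q) = (\<Sum>\<alpha>\<in>Poly_Mapping.keys p. \<Sum>\<beta>\<in>Poly_Mapping.keys q.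
      monom (Poly_Mapping.lookup p \<alpha>) (mon_weight a d \<alpha>) * monom (Poly_Mapping.lookup q \<beta>) (mon_weight a d \<beta>))"
    by (simp add: phi_sum phi_single mon_weight_add mult_monom)
  then show ?thesis
    by (simp add: phi_eq sum_product)
qed

section \<open>Ideals generated by binomials\<close>

lemma ideal_gen_zero: "0 \<in> ideal_gen S"
  unfolding ideal_gen_def by (intro CollectI exI[of _ "{}"]) simp

lemma ideal_gen_add:
  assumes "p \<in> ideal_gen S" "q \<in> ideal_gen S"
  shows "p + q \<in> ideal_gen S"
proof -
  obtain F c G e where F: "finite F" "F \<subseteq> S" "p = (\<Sum>h\<in>F. c h * h)"
    and G: "finite G" "G \<subseteq> S" "q = (\<Sum>h\<in>G. e h * h)"
    using assms unfolding ideal_gen_def by blast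
  define c' where "c' h = (if h \<in> F then c h else 0) + (if h \<in> G then e h else 0)" for h
  have "(\<Sum>h\<in>F \<union> G. (if h \<in> F then c h * h else 0)) = p"
    using F G by (simp add: sum.If_cases Int_absorb1)
  moreover have "(\<Sum>h\<in>F \<union> G. (if h \<in> G then e h * h else 0)) = q"
    using F G by (simp add: sum.If_cases Int_absorb1)
  ultimately have "p + q = (\<Sum>h\<in>F \<union> G. (if h \<in> F then c h * h else 0) + (if h \<in> G then e h * h else 0))"
    by (simp add: sum.distrib)
  also have "\<dots> = (\<Sum>h\<in>F \<union> G. c' h * h)"
    by (rule sum.cong) (simp_all add: c'_def distrib_right)
  finally have "p + q = (\<Sum>h\<in>F \<union> G. c' h * h)" .
  then show ?thesis
    unfolding ideal_gen_def using F G by (intro CollectI exI[of _ "F \<union> G"] exI[of _ c']) simp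
qed

lemma ideal_gen_mult:
  assumes "p \<in> ideal_gen S"
  shows "r * p \<in> ideal_gen S"
proof -
  obtain F c where F: "finite F" "F \<subseteq> S" "p = (\<Sum>h\<in>F. c h * h)"
    using assms unfolding ideal_gen_def by blast
  then have "r * p = (\<Sum>h\<in>F. (r * c h) * h)"
    by (simp add: sum_distrib_left mult.assoc)
  then show ?thesis
    unfolding ideal_gen_def using F by (intro CollectI exI[of _ F] exI[of _ "\<lambda>h. r * c h"]) simp
qed

lemma ideal_gen_uminus: "p \<in> ideal_gen S \<Longrightarrow> - p \<in> ideal_gen S"
  using ideal_gen_mult[of p S "- 1"] by simp

lemma ideal_gen_generator: "h \<in> S \<Longrightarrow> h \<in> ideal_gen S"
  unfolding ideal_gen_def by (intro CollectI exI[of _ "{h}"] exI[of _ "\<lambda>_. 1"]) simp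

lemma ideal_gen_mono: "T \<subseteq> S \<Longrightarrow> ideal_gen T \<subseteq> ideal_gen S"
  unfolding ideal_gen_def by blast

lemma ideal_gen_subset_kernel:
  assumes "\<forall>h\<in>S. phi a d h = 0"
  shows "ideal_gen S \<subseteq> kernel_p4 a d"
proof
  fix p assume "p \<in> ideal_gen S"
  then obtain F c where F: "finite F" "F \<subseteq> S" "p = (\<Sum>h\<in>F. c h * h)"
    unfolding ideal_gen_def by blast
  then have "phi a d p = (\<Sum>h\<in>F. phi a d (c h) * phi a d h)"
    by (simp add: phi_sum phi_mult)
  also have "\<dots> = 0"
    using F assms by (intro sum.neutral) auto
  finally show "p \<in> kernel_p4 a d"
    by (simp add: kernel_p4_def)
qed

definition mon_dvd :: "(var4 \<Rightarrow>\<^sub>0 nat) \<Rightarrow> (var4 \<Rightarrow>\<^sub>0 nat) \<Rightarrow> bool" where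
  "mon_dvd \<beta> \<alpha> \<longleftrightarrow> (\<exists>r. \<alpha> = \<beta> + r)"

lemma mon_dvd_iff:
  "mon_dvd \<beta> \<alpha> \<longleftrightarrow>
     Poly_Mapping.lookup \<beta> V1 \<le> Poly_Mapping.lookup \<alpha> V1 \<and> Poly_Mapping.lookup \<beta> V2 \<le> Poly_Mapping.lookup \<alpha> V2 \<and>
     Poly_Mapping.lookup \<beta> V3 \<le> Poly_Mapping.lookup \<alpha> V3 \<and> Poly_Mapping.lookup \<beta> V4 \<le> Poly_Mapping.lookup \<alpha> V4"
proof
  assume "mon_dvd \<beta> \<alpha>"
  then show "Poly_Mapping.lookup \<beta> V1 \<le> Poly_Mapping.lookup \<alpha> V1 \<and> Poly_Mapping.lookup \<beta> V2 \<le> Poly_Mapping.lookup \<alpha> V2 \<and>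
     Poly_Mapping.lookup \<beta> V3 \<le> Poly_Mapping.lookup \<alpha> V3 \<and> Poly_Mapping.lookup \<beta> V4 \<le> Poly_Mapping.lookup \<alpha> V4"
    by (auto simp: mon_dvd_def lookup_add)
next
  assume "Poly_Mapping.lookup \<beta> V1 \<le> Poly_Mapping.lookup \<alpha> V1 \<and> Poly_Mapping.lookup \<beta> V2 \<le> Poly_Mapping.lookup \<alpha> V2 \<and>
     Poly_Mapping.lookup \<beta> V3 \<le> Poly_Mapping.lookup \<alpha> V3 \<and> Poly_Mapping.lookup \<beta> V4 \<le> Poly_Mapping.lookup \<alpha> V4"
  then have "\<alpha> = \<beta> + (\<alpha> - \<beta>)"
    by (intro poly_mapping_var4_eqI) (simp_all add: lookup_add lookup_minus)
  then show "mon_dvd \<beta> \<alpha>"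
    unfolding mon_dvd_def by blast
qed

lemma lookup_ideal_gen_eq_0:
  assumes not_dvd: "\<And>g \<beta>. g \<in> T \<Longrightarrow> \<beta> \<in> Poly_Mapping.keys g \<Longrightarrow> \<not> mon_dvd \<beta> \<mu>"
    and "p \<in> ideal_gen T"
  shows "Poly_Mapping.lookup p \<mu> = 0"
proof -
  obtain F c where F: "finite F" "F \<subseteq> T" "p = (\<Sum>h\<in>F. c h * h)"
    using assms(2) unfolding ideal_gen_def by blast
  have "Poly_Mapping.lookup (c h * h) \<mu> = 0" if "h \<in> T" for h
  proof -
    have "(Poly_Mapping.lookup h \<beta> when \<mu> = \<gamma> + \<beta>) = 0" for \<gamma> \<beta>
    proof (cases "\<beta> \<in> Poly_Mapping.keys h")
      case True
      then have "\<mu> \<noteq> \<gamma> + \<beta>"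
        using not_dvd[OF that] by (metis add.commute mon_dvd_def)
      then show ?thesis by simp
    qed (simp add: in_keys_iff)
    then show ?thesis
      by (simp add: lookup_mult)
  qed
  then show ?thesis
    using F by (simp add: lookup_sum subsetD)
qed

definition binom :: "(var4 \<Rightarrow>\<^sub>0 nat) \<Rightarrow> (var4 \<Rightarrow>\<^sub>0 nat) \<Rightarrow> 'k::field mpoly4" where
  "binom \<alpha> \<beta> = Poly_Mapping.single \<alpha> 1 - Poly_Mapping.single \<beta> 1"

abbreviation mon_equiv :: "'k::field mpoly4 set \<Rightarrow> (var4 \<Rightarrow>\<^sub>0 nat) \<Rightarrow> (var4 \<Rightarrow>\<^sub>0 nat) \<Rightarrow> bool" where
  "mon_equiv S \<alpha> \<beta> \<equiv> binom \<alpha> \<beta> \<in> ideal_gen S"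

lemma mon_equiv_refl: "mon_equiv S \<alpha> \<alpha>"
  by (simp add: binom_def ideal_gen_zero)

lemma mon_equiv_sym: "mon_equiv S \<alpha> \<beta> \<Longrightarrow> mon_equiv S \<beta> \<alpha>"
  using ideal_gen_uminus[of "binom \<alpha> \<beta>" S] by (simp add: binom_def)

lemma mon_equiv_trans: "mon_equiv S \<alpha> \<beta> \<Longrightarrow> mon_equiv S \<beta> \<gamma> \<Longrightarrow> mon_equiv S \<alpha> \<gamma>"
  using ideal_gen_add[of "binom \<alpha> \<beta>" S "binom \<beta> \<gamma>"] by (simp add: binom_def)

lemma mon_equiv_add: "mon_equiv S \<alpha> \<beta> \<Longrightarrow> mon_equiv S (\<alpha> + \<gamma>) (\<beta> + \<gamma>)"
  using ideal_gen_mult[of "binom \<alpha> \<beta>" S "Poly_Mapping.single \<gamma> 1"]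
  by (simp add: binom_def right_diff_distrib mult_single add.commute)

lemma phi_binom_eq_0_iff:
  "phi a d (binom \<alpha> \<beta> :: 'k::field mpoly4) = 0 \<longleftrightarrow> mon_weight a d \<alpha> = mon_weight a d \<beta>"
proof -
  have "phi a d (binom \<alpha> \<beta> :: 'k mpoly4) = monom 1 (mon_weight a d \<alpha>) - monom 1 (mon_weight a d \<beta>)"
    by (simp add: binom_def phi_diff phi_single)
  then show ?thesis
    by (simp add: monom_eq_iff')
qed

lemma keys_binom: "Poly_Mapping.keys (binom \<alpha> \<beta>) \<subseteq> {\<alpha>, \<beta>}"
  by (auto simp: binom_def in_keys_iff lookup_minus lookup_single when_def split: if_splits)

lemma lookup_binom_neq_0:
  assumes "\<alpha> \<noteq> \<beta>" "\<gamma> \<in> {\<alpha>, \<beta>}"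
  shows "Poly_Mapping.lookup (binom \<alpha> \<beta> :: 'k::field mpoly4) \<gamma> \<noteq> 0"
  using assms by (cases "\<gamma> = \<alpha>") (simp_all add: binom_def lookup_minus lookup_single)

lemma kernel_key_partner:
  assumes "phi a d p = 0" "\<alpha> \<in> Poly_Mapping.keys p"
  obtains \<beta> where "\<beta> \<in> Poly_Mapping.keys p" "\<beta> \<noteq> \<alpha>" "mon_weight a d \<beta> = mon_weight a d \<alpha>"
proof (rule ccontr)
  note partner = that
  assume "\<not> thesis"
  then have no_partner: "mon_weight a d \<beta> \<noteq> mon_weight a d \<alpha>"
    if "\<beta> \<in> Poly_Mapping.keys p" "\<beta> \<noteq> \<alpha>" for \<beta>
    using partner that by blast
  have "coeff (phi a d p) (mon_weight a d \<alpha>) = (\<Sum>\<beta>\<in>Poly_Mapping.keys p.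
      if mon_weight a d \<beta> = mon_weight a d \<alpha> then Poly_Mapping.lookup p \<beta> else 0)"
    by (simp add: phi_eq coeff_sum coeff_monom)
  also have "\<dots> = (\<Sum>\<beta>\<in>Poly_Mapping.keys p. if \<beta> = \<alpha> then Poly_Mapping.lookup p \<beta> else 0)"
    using no_partner by (intro sum.cong) auto
  also have "\<dots> = Poly_Mapping.lookup p \<alpha>"
    using assms(2) by simp
  finally show False
    using assms by (simp add: in_keys_iff)
qed

lemma card_keys_cancel_less:
  fixes p :: "'a \<Rightarrow>\<^sub>0 'b::ab_group_add"
  assumes "\<alpha> \<in> Poly_Mapping.keys p" "\<beta> \<in> Poly_Mapping.keys p" "\<beta> \<noteq> \<alpha>"
  shows "card (Poly_Mapping.keys (p - (Poly_Mapping.single \<alpha> (Poly_Mapping.lookup p \<alpha>)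
      - Poly_Mapping.single \<beta> (Poly_Mapping.lookup p \<alpha>)))) < card (Poly_Mapping.keys p)"
    (is "card (Poly_Mapping.keys ?q) < _")
proof -
  have "Poly_Mapping.lookup ?q \<gamma> =
      Poly_Mapping.lookup p \<gamma> - (if \<gamma> = \<alpha> then Poly_Mapping.lookup p \<alpha> else 0)
      + (if \<gamma> = \<beta> then Poly_Mapping.lookup p \<alpha> else 0)" for \<gamma>
    by (auto simp: lookup_minus lookup_single)
  then have "Poly_Mapping.keys ?q \<subseteq> Poly_Mapping.keys p - {\<alpha>}"
    using assms(2,3) by (auto simp: in_keys_iff split: if_splits)
  then have "card (Poly_Mapping.keys ?q) \<le> card (Poly_Mapping.keys p - {\<alpha>})"
    by (simp add: card_mono)
  also have "\<dots> < card (Poly_Mapping.keys p)"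
    using assms(1) by (intro card_Diff1_less) simp_all
  finally show ?thesis .
qed

lemma kernel_subset_ideal_gen:
  fixes S :: "'k::field mpoly4 set"
  assumes connected: "\<And>\<alpha> \<beta>. mon_weight a d \<alpha> = mon_weight a d \<beta> \<Longrightarrow> mon_equiv S \<alpha> \<beta>"
  shows "kernel_p4 a d \<subseteq> ideal_gen S"
proof
  fix p :: "'k mpoly4"
  assume "p \<in> kernel_p4 a d"
  then have "phi a d p = 0"
    by (simp add: kernel_p4_def)
  then show "p \<in> ideal_gen S"
  proof (induction "card (Poly_Mapping.keys p)" arbitrary: p rule: less_induct)
    case less
    show ?case
    proof (cases "p = 0")
      case True
      then show ?thesis by (simp add: ideal_gen_zero)
    next
      case False
      then obtain \<alpha> where \<alpha>: "\<alpha> \<in> Poly_Mapping.keys p"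
        by (metis all_not_in_conv keys_eq_empty)
      obtain \<beta> where \<beta>: "\<beta> \<in> Poly_Mapping.keys p" "\<beta> \<noteq> \<alpha>" "mon_weight a d \<beta> = mon_weight a d \<alpha>"
        using kernel_key_partner[OF less.prems \<alpha>] .
      define move where
        "move = Poly_Mapping.single \<alpha> (Poly_Mapping.lookup p \<alpha>) - Poly_Mapping.single \<beta> (Poly_Mapping.lookup p \<alpha>)"
      have "move = Poly_Mapping.single 0 (Poly_Mapping.lookup p \<alpha>) * binom \<alpha> \<beta>"
        by (simp add: move_def binom_def right_diff_distrib mult_single)
      then have move: "move \<in> ideal_gen S"
        using ideal_gen_mult[OF connected[OF \<beta>(3)[symmetric]]] by simp
      have "card (Poly_Mapping.keys (p - move)) < card (Poly_Mapping.keys p)"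
        unfolding move_def using \<alpha> \<beta>(1,2) by (rule card_keys_cancel_less)
      moreover have "phi a d (p - move) = 0"
        using less.prems \<beta>(3) by (simp add: move_def phi_diff phi_single)
      ultimately have "p - move \<in> ideal_gen S"
        by (rule less.hyps)
      then show ?thesis
        using ideal_gen_add[OF _ move] by (metis diff_add_cancel)
    qed
  qed
qed

definition isolated_mon :: "((var4 \<Rightarrow>\<^sub>0 nat) \<times> (var4 \<Rightarrow>\<^sub>0 nat)) set \<Rightarrow> (var4 \<Rightarrow>\<^sub>0 nat) \<Rightarrow> bool" where
  "isolated_mon P \<mu> \<longleftrightarrow> (\<forall>(\<alpha>, \<beta>)\<in>P. \<not> mon_dvd \<alpha> \<mu> \<and> \<not> mon_dvd \<beta> \<mu>)"

lemma isolated_monD: "isolated_mon P \<mu> \<Longrightarrow> (\<alpha>, \<beta>) \<in> P \<Longrightarrow> \<not> mon_dvd \<alpha> \<mu> \<and> \<not> mon_dvd \<beta> \<mu>"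
  unfolding isolated_mon_def by fast

lemma minimally_generates_binomials:
  fixes S :: "'k::field mpoly4 set"
  assumes S: "S = (\<lambda>(\<alpha>, \<beta>). binom \<alpha> \<beta>) ` P"
    and gen: "ideal_gen S = I"
    and isolated: "\<forall>(\<alpha>, \<beta>)\<in>P. \<alpha> \<noteq> \<beta> \<and>
      (isolated_mon (P - {(\<alpha>, \<beta>)}) \<alpha> \<or> isolated_mon (P - {(\<alpha>, \<beta>)}) \<beta>)"
  shows "minimally_generates S I"
proof -
  have "ideal_gen T \<noteq> I" if T: "T \<subset> S" for T
  proof
    assume TI: "ideal_gen T = I"
    obtain h where h: "h \<in> S" "h \<notin> T"
      using T by blast
    then obtain \<alpha> \<beta> where \<alpha>\<beta>: "(\<alpha>, \<beta>) \<in> P" "h = binom \<alpha> \<beta>"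
      using S by auto
    have "h \<in> ideal_gen T"
      using TI gen ideal_gen_generator[OF h(1)] by simp
    moreover have "T \<subseteq> S - {h}"
      using T h(2) by blast
    ultimately have h_red: "h \<in> ideal_gen (S - {h})"
      using ideal_gen_mono by blast
    have "\<alpha> \<noteq> \<beta>" "isolated_mon (P - {(\<alpha>, \<beta>)}) \<alpha> \<or> isolated_mon (P - {(\<alpha>, \<beta>)}) \<beta>"
      using bspec[OF isolated \<alpha>\<beta>(1)] by simp_all
    then obtain \<mu> where \<mu>: "\<mu> \<in> {\<alpha>, \<beta>}" "isolated_mon (P - {(\<alpha>, \<beta>)}) \<mu>"
      by blast
    have "Poly_Mapping.lookup h \<mu> = 0"
    proof (rule lookup_ideal_gen_eq_0[OF _ h_red])
      fix g \<gamma> assume g: "g \<in> S - {h}" and \<gamma>: "\<gamma> \<in> Poly_Mapping.keys g"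
      obtain \<alpha>' \<beta>' where \<alpha>'\<beta>': "(\<alpha>', \<beta>') \<in> P" "g = binom \<alpha>' \<beta>'"
        using g S by auto
      then have "(\<alpha>', \<beta>') \<in> P - {(\<alpha>, \<beta>)}"
        using g \<alpha>\<beta>(2) by auto
      then have "\<not> mon_dvd \<alpha>' \<mu> \<and> \<not> mon_dvd \<beta>' \<mu>"
        by (rule isolated_monD[OF \<mu>(2)])
      moreover have "\<gamma> \<in> {\<alpha>', \<beta>'}"
        using \<gamma> keys_binom \<alpha>'\<beta>'(2) by blast
      ultimately show "\<not> mon_dvd \<gamma> \<mu>"
        by blast
    qed
    then show False
      using lookup_binom_neq_0[OF \<open>\<alpha> \<noteq> \<beta>\<close> \<mu>(1), where 'k = 'k] \<alpha>\<beta>(2) by simp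
  qed
  then show ?thesis
    unfolding minimally_generates_def using gen by blast
qed

section \<open>Normal forms of monomials\<close>

definition mon4 :: "nat \<Rightarrow> nat \<Rightarrow> nat \<Rightarrow> nat \<Rightarrow> var4 \<Rightarrow>\<^sub>0 nat" where
  "mon4 i j k l = Poly_Mapping.single V1 i + Poly_Mapping.single V2 j
     + Poly_Mapping.single V3 k + Poly_Mapping.single V4 l"

lemma lookup_mon4 [simp]:
  "Poly_Mapping.lookup (mon4 i j k l) V1 = i" "Poly_Mapping.lookup (mon4 i j k l) V2 = j"
  "Poly_Mapping.lookup (mon4 i j k l) V3 = k" "Poly_Mapping.lookup (mon4 i j k l) V4 = l"
  by (simp_all add: mon4_def lookup_add lookup_single)

lemma mon4_eq_iff [simp]: "mon4 i j k l = mon4 i' j' k' l' \<longleftrightarrow> i = i' \<and> j = j' \<and> k = k' \<and> l = l'"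
proof
  assume "mon4 i j k l = mon4 i' j' k' l'"
  then have "Poly_Mapping.lookup (mon4 i j k l) v = Poly_Mapping.lookup (mon4 i' j' k' l') v" for v
    by simp
  from this[of V1] this[of V2] this[of V3] this[of V4]
  show "i = i' \<and> j = j' \<and> k = k' \<and> l = l'"
    by simp
qed simp

lemma mon4_zero [simp]: "mon4 0 0 0 0 = 0"
  by (simp add: mon4_def)

lemma a_degree_mon4 [simp]: "a_degree (mon4 i j k l) = i + 2 * j + 3 * k + 4 * l"
  by (simp add: a_degree_def)

lemma d_degree_mon4 [simp]: "d_degree (mon4 i j k l) = j + 3 * k + 6 * l"
  by (simp add: d_degree_def)

lemma mon4_add [simp]: "mon4 i j k l + mon4 i' j' k' l' = mon4 (i + i') (j + j') (k + k') (l + l')"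
  by (simp add: mon4_def single_add algebra_simps)

lemma xv_eq_mon4:
  "x1 = Poly_Mapping.single (mon4 1 0 0 0) 1" "x2 = Poly_Mapping.single (mon4 0 1 0 0) 1"
  "x3 = Poly_Mapping.single (mon4 0 0 1 0) 1" "x4 = Poly_Mapping.single (mon4 0 0 0 1) 1"
  by (simp_all add: xv_def mon4_def)

lemma single_mon4_power [simp]:
  "Poly_Mapping.single (mon4 i j k l) (1::'k::field) ^ n = Poly_Mapping.single (mon4 (n * i) (n * j) (n * k) (n * l)) 1"
  by (induction n) (simp_all add: mult_single)

lemma single_mon4_mult [simp]:
  "Poly_Mapping.single (mon4 i j k l) (1::'k::field) * Poly_Mapping.single (mon4 i' j' k' l') 1 =
     Poly_Mapping.single (mon4 (i + i') (j + j') (k + k') (l + l')) 1"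
  by (simp add: mult_single)

definition normal_mon :: "nat \<Rightarrow> (var4 \<Rightarrow>\<^sub>0 nat) \<Rightarrow> bool" where
  "normal_mon a \<alpha> \<longleftrightarrow> Poly_Mapping.lookup \<alpha> V2 \<le> 2 \<and> Poly_Mapping.lookup \<alpha> V3 \<le> 1 \<and> d_degree \<alpha> < a"

lemma d_degree_eq_if_mon_weight_eq:
  assumes "coprime a d" "d_degree \<alpha> < a" "d_degree \<beta> < a"
    and "mon_weight a d \<alpha> = mon_weight a d \<beta>"
  shows "d_degree \<alpha> = d_degree \<beta>"
proof -
  have "int a * (int (a_degree \<alpha>) - int (a_degree \<beta>)) = int d * (int (d_degree \<beta>) - int (d_degree \<alpha>))"
    using arg_cong[OF assms(4), of int] by (simp add: mon_weight_eq algebra_simps)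
  then have "int a dvd int d * (int (d_degree \<beta>) - int (d_degree \<alpha>))"
    by (metis dvd_triv_left)
  then have "int a dvd int (d_degree \<beta>) - int (d_degree \<alpha>)"
    using assms(1) by (simp add: coprime_dvd_mult_right_iff)
  moreover have "\<bar>int (d_degree \<beta>) - int (d_degree \<alpha>)\<bar> < \<bar>int a\<bar>"
    using assms(2,3) by linarith
  ultimately have "int (d_degree \<beta>) - int (d_degree \<alpha>) = 0"
    using dvd_imp_le_int by (meson leD)
  then show ?thesis
    by simp
qed

lemma mixed_radix_digits_unique:
  fixes j k l j' k' l' :: nat
  assumes "j \<le> 2" "k \<le> 1" "j' \<le> 2" "k' \<le> 1" "j + 3 * k + 6 * l = j' + 3 * k' + 6 * l'"
  shows "j = j' \<and> k = k' \<and> l = l'"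
proof -
  have digits: "(x + 3 * y + 6 * z) mod 3 = x" "((x + 3 * y + 6 * z) div 3) mod 2 = y"
    "(x + 3 * y + 6 * z) div 6 = z" if "x \<le> 2" "y \<le> 1" for x y z :: nat
    using that by presburger+
  show ?thesis
    using digits[OF assms(1,2), of l] digits[OF assms(3,4), of l'] assms(5) by metis
qed

lemma normal_mon_unique:
  assumes "coprime a d" "normal_mon a \<alpha>" "normal_mon a \<beta>"
    and W: "mon_weight a d \<alpha> = mon_weight a d \<beta>"
  shows "\<alpha> = \<beta>"
proof -
  have D: "d_degree \<alpha> = d_degree \<beta>"
    using d_degree_eq_if_mon_weight_eq assms unfolding normal_mon_def by blast
  then have "a_degree \<alpha> = a_degree \<beta>"
    using W assms(2) by (simp add: mon_weight_eq normal_mon_def)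
  moreover have "Poly_Mapping.lookup \<alpha> V2 = Poly_Mapping.lookup \<beta> V2 \<and>
      Poly_Mapping.lookup \<alpha> V3 = Poly_Mapping.lookup \<beta> V3 \<and> Poly_Mapping.lookup \<alpha> V4 = Poly_Mapping.lookup \<beta> V4"
    using D assms(2,3) unfolding normal_mon_def d_degree_def by (intro mixed_radix_digits_unique) simp_all
  ultimately show ?thesis
    by (intro poly_mapping_var4_eqI) (simp_all add: a_degree_def)
qed

lemma mon_equiv_reduce_x2_x3:
  assumes "binom (mon4 0 0 2 0) (mon4 2 0 0 1) \<in> S" "binom (mon4 0 3 0 0) (mon4 3 0 1 0) \<in> S"
  shows "\<exists>\<beta>. mon_equiv S \<alpha> \<beta> \<and> Poly_Mapping.lookup \<beta> V2 \<le> 2 \<and> Poly_Mapping.lookup \<beta> V3 \<le> 1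
    \<and> d_degree \<beta> = d_degree \<alpha>"
proof (induction "Poly_Mapping.lookup \<alpha> V2 + Poly_Mapping.lookup \<alpha> V3" arbitrary: \<alpha> rule: less_induct)
  case less
  have move: ?case
    if gen: "binom u v \<in> S" and dvd: "mon_dvd u \<alpha>" and deg: "d_degree v = d_degree u"
      and smaller: "Poly_Mapping.lookup v V2 + Poly_Mapping.lookup v V3
        < Poly_Mapping.lookup u V2 + Poly_Mapping.lookup u V3"
    for u v
  proof -
    obtain r where \<alpha>: "\<alpha> = u + r"
      using dvd unfolding mon_dvd_def by blast
    have step: "mon_equiv S \<alpha> (v + r)"
      unfolding \<alpha> using gen by (intro mon_equiv_add ideal_gen_generator)
    obtain \<beta> where \<beta>: "mon_equiv S (v + r) \<beta>" "Poly_Mapping.lookup \<beta> V2 \<le> 2"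
      "Poly_Mapping.lookup \<beta> V3 \<le> 1" "d_degree \<beta> = d_degree (v + r)"
      using less.hyps[of "v + r"] smaller by (auto simp: \<alpha> lookup_add)
    have "mon_equiv S \<alpha> \<beta>"
      using step \<beta>(1) by (rule mon_equiv_trans)
    then show ?thesis
      using \<beta>(2-4) deg unfolding \<alpha> by auto
  qed
  consider "3 \<le> Poly_Mapping.lookup \<alpha> V2" | "2 \<le> Poly_Mapping.lookup \<alpha> V3"
    | "Poly_Mapping.lookup \<alpha> V2 \<le> 2" "Poly_Mapping.lookup \<alpha> V3 \<le> 1"
    by linarith
  then show ?case
  proof cases
    case 1
    then show ?thesis
      using move[OF assms(2)] by (simp add: mon_dvd_iff)
  next
    case 2
    then show ?thesis
      using move[OF assms(1)] by (simp add: mon_dvd_iff)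
  next
    case 3
    then show ?thesis
      using mon_equiv_refl by blast
  qed
qed

lemma mon_equiv_normal_mon:
  assumes "binom (mon4 0 0 2 0) (mon4 2 0 0 1) \<in> S" "binom (mon4 0 3 0 0) (mon4 3 0 1 0) \<in> S"
    and descent: "\<And>\<beta>. Poly_Mapping.lookup \<beta> V2 \<le> 2 \<Longrightarrow> Poly_Mapping.lookup \<beta> V3 \<le> 1 \<Longrightarrow> a \<le> d_degree \<beta> \<Longrightarrow>
      \<exists>\<gamma>. mon_equiv S \<beta> \<gamma> \<and> d_degree \<gamma> < d_degree \<beta>"
  shows "\<exists>\<beta>. mon_equiv S \<alpha> \<beta> \<and> normal_mon a \<beta>"
proof (induction "d_degree \<alpha>" arbitrary: \<alpha> rule: less_induct)
  case less
  obtain \<beta> where \<beta>: "mon_equiv S \<alpha> \<beta>" "Poly_Mapping.lookup \<beta> V2 \<le> 2" "Poly_Mapping.lookup \<beta> V3 \<le> 1"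
    "d_degree \<beta> = d_degree \<alpha>"
    using mon_equiv_reduce_x2_x3[OF assms(1,2)] by blast
  show ?case
  proof (cases "d_degree \<beta> < a")
    case True
    then show ?thesis
      using \<beta> unfolding normal_mon_def by blast
  next
    case False
    then obtain \<gamma> where "mon_equiv S \<beta> \<gamma>" "d_degree \<gamma> < d_degree \<alpha>"
      using descent \<beta> by fastforce
    then show ?thesis
      using less.hyps \<beta>(1) mon_equiv_trans by blast
  qed
qed

lemma mon_equiv_if_mon_weight_eq:
  fixes S :: "'k::field mpoly4 set"
  assumes sound: "ideal_gen S \<subseteq> kernel_p4 a d" and "coprime a d"
    and normal: "\<And>\<alpha>. \<exists>\<beta>. mon_equiv S \<alpha> \<beta> \<and> normal_mon a \<beta>"
    and W: "mon_weight a d \<alpha> = mon_weight a d \<beta>"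
  shows "mon_equiv S \<alpha> \<beta>"
proof -
  obtain \<alpha>' \<beta>' where \<alpha>': "mon_equiv S \<alpha> \<alpha>'" "normal_mon a \<alpha>'"
    and \<beta>': "mon_equiv S \<beta> \<beta>'" "normal_mon a \<beta>'"
    using normal by metis
  have "mon_weight a d \<alpha> = mon_weight a d \<alpha>'" "mon_weight a d \<beta> = mon_weight a d \<beta>'"
    using subsetD[OF sound \<alpha>'(1)] subsetD[OF sound \<beta>'(1)]
    by (simp_all add: kernel_p4_def phi_binom_eq_0_iff)
  then have "mon_weight a d \<alpha>' = mon_weight a d \<beta>'"
    using W by simp
  then have "\<alpha>' = \<beta>'"
    by (rule normal_mon_unique[OF \<open>coprime a d\<close> \<alpha>'(2) \<beta>'(2)])
  then show ?thesis
    using \<alpha>'(1) mon_equiv_sym[OF \<beta>'(1)] mon_equiv_trans by blast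
qed

lemma minimally_generates_kernel:
  fixes S :: "'k::field mpoly4 set"
  assumes S: "S = (\<lambda>(\<alpha>, \<beta>). binom \<alpha> \<beta>) ` P"
    and weight: "\<forall>(\<alpha>, \<beta>)\<in>P. mon_weight a d \<alpha> = mon_weight a d \<beta>"
    and quadrics: "(mon4 0 0 2 0, mon4 2 0 0 1) \<in> P" "(mon4 0 3 0 0, mon4 3 0 1 0) \<in> P"
    and descent: "\<forall>\<beta>. Poly_Mapping.lookup \<beta> V2 \<le> 2 \<longrightarrow> Poly_Mapping.lookup \<beta> V3 \<le> 1 \<longrightarrow> a \<le> d_degree \<beta> \<longrightarrow>
      (\<exists>(u, v)\<in>P. mon_dvd v \<beta> \<and> d_degree u < d_degree v)"
    and isolated: "\<forall>(\<alpha>, \<beta>)\<in>P. \<alpha> \<noteq> \<beta> \<and>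
      (isolated_mon (P - {(\<alpha>, \<beta>)}) \<alpha> \<or> isolated_mon (P - {(\<alpha>, \<beta>)}) \<beta>)"
    and "coprime a d"
  shows "minimally_generates S (kernel_p4 a d)"
proof (rule minimally_generates_binomials[OF S _ isolated])
  have generator: "binom u v \<in> S" if "(u, v) \<in> P" for u v
    using S that by force
  have lowering: "\<exists>\<gamma>. mon_equiv S \<beta> \<gamma> \<and> d_degree \<gamma> < d_degree \<beta>"
    if "Poly_Mapping.lookup \<beta> V2 \<le> 2" "Poly_Mapping.lookup \<beta> V3 \<le> 1" "a \<le> d_degree \<beta>" for \<beta>
  proof -
    from descent that obtain u v r where "(u, v) \<in> P" "\<beta> = v + r" "d_degree u < d_degree v"
      unfolding mon_dvd_def by blast
    then show ?thesis
      using mon_equiv_add[OF mon_equiv_sym[OF ideal_gen_generator[OF generator]]] by fastforce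
  qed
  have normal: "\<exists>\<beta>. mon_equiv S \<alpha> \<beta> \<and> normal_mon a \<beta>" for \<alpha>
    using generator[OF quadrics(1)] generator[OF quadrics(2)] lowering by (rule mon_equiv_normal_mon)
  have sound: "ideal_gen S \<subseteq> kernel_p4 a d"
    using weight S by (intro ideal_gen_subset_kernel) (auto simp: phi_binom_eq_0_iff)
  have "mon_equiv S \<alpha> \<beta>" if "mon_weight a d \<alpha> = mon_weight a d \<beta>" for \<alpha> \<beta>
    using sound \<open>coprime a d\<close> normal that by (rule mon_equiv_if_mon_weight_eq)
  then have "kernel_p4 a d \<subseteq> ideal_gen S"
    by (rule kernel_subset_ideal_gen)
  with sound
  show "ideal_gen S = kernel_p4 a d"
    by blast
qed

section \<open>The generating sets \<open>H\<^sub>q\<close>\<close>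

text \<open>The exponents in \<open>H\<^sub>q\<close> such as \<open>4m + d - 6\<close> are truncated subtractions on \<open>nat\<close>;
  comparing weights over \<open>int\<close> lets \<open>of_nat_diff\<close> remove them.\<close>

lemma mon_weight_eq_iff_int:
  "mon_weight a d \<alpha> = mon_weight a d \<beta> \<longleftrightarrow>
     int a * int (a_degree \<alpha>) + int d * int (d_degree \<alpha>) = int a * int (a_degree \<beta>) + int d * int (d_degree \<beta>)"
proof -
  have int_weight: "int (mon_weight a d \<gamma>) = int a * int (a_degree \<gamma>) + int d * int (d_degree \<gamma>)" for \<gamma>
    by (simp add: mon_weight_eq)
  show ?thesis
    by (simp only: of_nat_eq_iff[where 'a = int, symmetric] int_weight)
qed

lemmas kernel_generator_simps = mon_weight_eq_iff_int mon_dvd_iff d_degree_def isolated_mon_def insert_Diff_if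

lemma minimally_generates_H0:
  assumes "a mod 6 = 0" "a \<ge> 7" "coprime a d"
  shows "minimally_generates (Hset a d :: 'k::field mpoly4 set) (kernel_p4 a d)"
proof -
  define m where "m = a div 6"
  have a: "a = 6 * m"
    using assms(1) div_mult_mod_eq[of a 6] unfolding m_def by linarith
  let ?P = "{(mon4 0 0 2 0, mon4 2 0 0 1), (mon4 0 3 0 0, mon4 3 0 1 0), (mon4 (4 * m + d) 0 0 0, mon4 0 0 0 m)}"
  have H: "Hset a d = (\<lambda>(\<alpha>, \<beta>). binom \<alpha> \<beta>) ` ?P"
    unfolding Hset_def Let_def m_def[symmetric] using assms(1) by (simp add: xv_eq_mon4 binom_def numeral_2_eq_2)
  have "m \<ge> 1"
    using assms(2) a by simp
  then show ?thesis
    using assms(3) by (intro minimally_generates_kernel[OF H])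
      (auto simp: a kernel_generator_simps algebra_simps)
qed

lemma minimally_generates_H1_exceptional:
  assumes "a = 7" "d = 1"
  shows "minimally_generates (Hset a d :: 'k::field mpoly4 set) (kernel_p4 a d)"
proof -
  let ?P = "{(mon4 0 0 2 0, mon4 2 0 0 1), (mon4 0 3 0 0, mon4 3 0 1 0), (mon4 7 0 0 0, mon4 0 1 0 1),
    (mon4 4 2 0 0, mon4 0 0 1 1), (mon4 2 2 1 0, mon4 0 0 0 2)}"
  have H: "Hset a d = (\<lambda>(\<alpha>, \<beta>). binom \<alpha> \<beta>) ` ?P"
    unfolding Hset_def Let_def using assms by (simp add: xv_eq_mon4 binom_def numeral_2_eq_2)
  show ?thesis
    using assms by (intro minimally_generates_kernel[OF H])
      (auto simp: kernel_generator_simps)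
qed

lemma minimally_generates_H1:
  assumes "a mod 6 = 1" "a \<ge> 7" "coprime a d" "d > 0" "\<not> (a div 6 = 1 \<and> d = 1)"
  shows "minimally_generates (Hset a d :: 'k::field mpoly4 set) (kernel_p4 a d)"
proof -
  define m where "m = a div 6"
  have a: "a = 6 * m + 1"
    using assms(1) div_mult_mod_eq[of a 6] unfolding m_def by linarith
  have "m \<ge> 1"
    using assms(2) a by simp
  have "\<not> (m = 1 \<and> d = 1)"
    using assms(5) unfolding m_def .
  then have "6 \<le> 4 * m + d"
    using \<open>m \<ge> 1\<close> assms(4) by (cases "m = 1") auto
  let ?P = "{(mon4 0 0 2 0, mon4 2 0 0 1), (mon4 0 3 0 0, mon4 3 0 1 0),
    (mon4 (4 * m + d - 6) 5 0 0, mon4 0 0 0 (m + 1)), (mon4 (4 * m + d - 1) 2 0 0, mon4 0 0 1 m),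
    (mon4 (4 * m + d + 2) 0 0 0, mon4 0 1 0 m)}"
  have H: "Hset a d = (\<lambda>(\<alpha>, \<beta>). binom \<alpha> \<beta>) ` ?P"
    unfolding Hset_def Let_def m_def[symmetric] if_not_P[OF \<open>\<not> (m = 1 \<and> d = 1)\<close>] using assms(1)
    by (simp add: xv_eq_mon4 binom_def numeral_2_eq_2)
  show ?thesis
    using \<open>m \<ge> 1\<close> \<open>6 \<le> 4 * m + d\<close> assms(3) by (intro minimally_generates_kernel[OF H])
      (auto simp: a kernel_generator_simps of_nat_diff algebra_simps)
qed

lemma minimally_generates_H2:
  assumes "a mod 6 = 2" "a \<ge> 7" "coprime a d"
  shows "minimally_generates (Hset a d :: 'k::field mpoly4 set) (kernel_p4 a d)"
proof -
  define m where "m = a div 6"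
  have a: "a = 6 * m + 2"
    using assms(1) div_mult_mod_eq[of a 6] unfolding m_def by linarith
  have "m \<ge> 1"
    using assms(2) a by simp
  let ?P = "{(mon4 0 0 2 0, mon4 2 0 0 1), (mon4 0 3 0 0, mon4 3 0 1 0),
    (mon4 (4 * m + d - 4) 4 0 0, mon4 0 0 0 (m + 1)), (mon4 (4 * m + d + 1) 1 0 0, mon4 0 0 1 m),
    (mon4 (4 * m + d + 4) 0 0 0, mon4 0 2 0 m)}"
  have H: "Hset a d = (\<lambda>(\<alpha>, \<beta>). binom \<alpha> \<beta>) ` ?P"
    unfolding Hset_def Let_def m_def[symmetric] using assms(1) by (simp add: xv_eq_mon4 binom_def numeral_2_eq_2)
  show ?thesis
    using \<open>m \<ge> 1\<close> assms(3) by (intro minimally_generates_kernel[OF H])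
      (auto simp: a kernel_generator_simps of_nat_diff algebra_simps)
qed

lemma minimally_generates_H3:
  assumes "a mod 6 = 3" "a \<ge> 7" "coprime a d"
  shows "minimally_generates (Hset a d :: 'k::field mpoly4 set) (kernel_p4 a d)"
proof -
  define m where "m = a div 6"
  have a: "a = 6 * m + 3"
    using assms(1) div_mult_mod_eq[of a 6] unfolding m_def by linarith
  have "m \<ge> 1"
    using assms(2) a by simp
  let ?P = "{(mon4 0 0 2 0, mon4 2 0 0 1), (mon4 0 3 0 0, mon4 3 0 1 0),
    (mon4 (4 * m + d - 2) 3 0 0, mon4 0 0 0 (m + 1)), (mon4 (4 * m + d + 3) 0 0 0, mon4 0 0 1 m)}"
  have H: "Hset a d = (\<lambda>(\<alpha>, \<beta>). binom \<alpha> \<beta>) ` ?P"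
    unfolding Hset_def Let_def m_def[symmetric] using assms(1) by (simp add: xv_eq_mon4 binom_def numeral_2_eq_2)
  show ?thesis
    using \<open>m \<ge> 1\<close> assms(3) by (intro minimally_generates_kernel[OF H])
      (auto simp: a kernel_generator_simps of_nat_diff algebra_simps)
qed

lemma minimally_generates_H4:
  assumes "a mod 6 = 4" "a \<ge> 7" "coprime a d"
  shows "minimally_generates (Hset a d :: 'k::field mpoly4 set) (kernel_p4 a d)"
proof -
  define m where "m = a div 6"
  have a: "a = 6 * m + 4"
    using assms(1) div_mult_mod_eq[of a 6] unfolding m_def by linarith
  let ?P = "{(mon4 0 0 2 0, mon4 2 0 0 1), (mon4 0 3 0 0, mon4 3 0 1 0),
    (mon4 (4 * m + d) 2 0 0, mon4 0 0 0 (m + 1)), (mon4 (4 * m + d + 5) 0 0 0, mon4 0 1 1 m)}"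
  have H: "Hset a d = (\<lambda>(\<alpha>, \<beta>). binom \<alpha> \<beta>) ` ?P"
    unfolding Hset_def Let_def m_def[symmetric] using assms(1) by (simp add: xv_eq_mon4 binom_def numeral_2_eq_2)
  have "m \<ge> 1"
    using assms(2) a by simp
  then show ?thesis
    using assms(3) by (intro minimally_generates_kernel[OF H])
      (auto simp: a kernel_generator_simps algebra_simps)
qed

lemma minimally_generates_H5:
  assumes "a mod 6 = 5" "a \<ge> 7" "coprime a d"
  shows "minimally_generates (Hset a d :: 'k::field mpoly4 set) (kernel_p4 a d)"
proof -
  define m where "m = a div 6"
  have a: "a = 6 * m + 5"
    using assms(1) div_mult_mod_eq[of a 6] unfolding m_def by linarith
  let ?P = "{(mon4 0 0 2 0, mon4 2 0 0 1), (mon4 0 3 0 0, mon4 3 0 1 0),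
    (mon4 (4 * m + d + 2) 1 0 0, mon4 0 0 0 (m + 1)), (mon4 (4 * m + d + 7) 0 0 0, mon4 0 2 1 m)}"
  have H: "Hset a d = (\<lambda>(\<alpha>, \<beta>). binom \<alpha> \<beta>) ` ?P"
    unfolding Hset_def Let_def m_def[symmetric] using assms(1) by (simp add: xv_eq_mon4 binom_def numeral_2_eq_2)
  have "m \<ge> 1"
    using assms(2) a by simp
  then show ?thesis
    using assms(3) by (intro minimally_generates_kernel[OF H])
      (auto simp: a kernel_generator_simps algebra_simps)
qed

theorem theorem4p3:
  fixes a d :: nat
  assumes "d > 0" and "a \<ge> 7" and "coprime a d"
  shows "minimally_generates (Hset a d :: 'k::field mpoly4 set) (kernel_p4 a d)"
proof -
  consider "a mod 6 = 0" | "a mod 6 = 1" | "a mod 6 = 2" | "a mod 6 = 3" | "a mod 6 = 4" | "a mod 6 = 5"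
    by linarith
  then show ?thesis
  proof cases
    case 1
    with assms show ?thesis by (intro minimally_generates_H0)
  next
    case 2
    show ?thesis
    proof (cases "a div 6 = 1 \<and> d = 1")
      case True
      then have "a = 7"
        using 2 div_mult_mod_eq[of a 6] by linarith
      with True show ?thesis by (intro minimally_generates_H1_exceptional) simp_all
    qed (use 2 assms in \<open>intro minimally_generates_H1\<close>)
  next
    case 3
    with assms show ?thesis by (intro minimally_generates_H2)
  next
    case 4
    with assms show ?thesis by (intro minimally_generates_H3)
  next
    case 5
    with assms show ?thesis by (intro minimally_generates_H4)
  next
    case 6
    with assms show ?thesis by (intro minimally_generates_H5)
  qed
qed

end
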